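(* Let $\lambda=(\lambda_1\ge\cdots\ge\lambda_n)$ be a partition with positive parts, $m=\lambda_1$, and let $\mathbf T_\lambda=\{(i,j):1\le i\le n,\ 1\le j\le\lambda_i\}$. Let $I_2(\mathbf T_\lambda)\subset K[\mathbf T_\lambda]$ be the ideal generated by the 2-minors of $\mathbf T_\lambda$, and let $L\subset K[\mathbf T_\lambda]$ be the ideal generated by the diagonal sums $$\sum_{i\ge1,\ (i,k+i)\in\mathbf T_\lambda}T_{i,k+i}\ (k=0,\dots,m-1),\qquad\sum_{i\ge1,\ (k+i,i)\in\mathbf T_\lambda}T_{k+i,i}\ (k=1,\dots,n-1).$$ Let $\prec$ be the reverse-lexicographic term order induced by $T_{1,1}>T_{1,2}>\cdots>T_{1,\lambda_1}>T_{2,1}>\cdots>T_{2,\lambda_2}>\cdots>T_{n,\lambda_n}$. Then $T_{ij}^j\in\mathrm{in}_\prec(I_2(\mathbf T_\lambda)+L)$ for every $(i,j)\in\mathbf T_\lambda$.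
   Context: $K$ is a field; $K[\mathbf T_\lambda]$ is the polynomial ring over $K$ in variables $T_{ij}$, $(i,j)\in\mathbf T_\lambda$. A 2-minor of $\mathbf T_\lambda$ is $T_{ij}T_{kl}-T_{il}T_{kj}$ with $i<k$, $j<l$ and $(i,j),(i,l),(k,j),(k,l)\in\mathbf T_\lambda$. *)

theory Defs
  imports Main "HOL-Library.Poly_Mapping"
begin

text \<open>Multivariate polynomials over a field in variables indexed by pairs (i,j):
  monomials are finitely supported exponent vectors, polynomials are finitely
  supported coefficient functions on monomials (multiplication = convolution).\<close>

type_synonym monom = "(nat \<times> nat) \<Rightarrow>\<^sub>0 nat"
type_synonym 'k mpoly = "monom \<Rightarrow>\<^sub>0 'k"

definition Var :: "nat \<times> nat \<Rightarrow> 'k::field mpoly" where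
  "Var v = Poly_Mapping.single (Poly_Mapping.single v 1) 1"

definition monomial_poly :: "monom \<Rightarrow> 'k::field mpoly" where
  "monomial_poly m = Poly_Mapping.single m 1"

text \<open>The shape T_lambda; lam ! (i-1) is lambda_i.\<close>
definition tableau :: "nat list \<Rightarrow> (nat \<times> nat) set" where
  "tableau lam = {(i,j). 1 \<le> i \<and> i \<le> length lam \<and> 1 \<le> j \<and> j \<le> lam ! (i - 1)}"

definition poly_ring :: "(nat \<times> nat) set \<Rightarrow> 'k::field mpoly set" where
  "poly_ring V = {q :: 'k mpoly. \<forall>u \<in> Poly_Mapping.keys q. Poly_Mapping.keys u \<subseteq> V}"

definition ideal_gen :: "(nat \<times> nat) set \<Rightarrow> 'k::field mpoly set \<Rightarrow> 'k mpoly set" where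
  "ideal_gen V S = {f. \<exists>cs gs. length cs = length gs \<and> set gs \<subseteq> S \<and> set cs \<subseteq> poly_ring V
                          \<and> f = sum_list (map2 (*) cs gs)}"

definition two_minors :: "nat list \<Rightarrow> 'k::field mpoly set" where
  "two_minors lam = {Var (i,j) * Var (k,l) - Var (i,l) * Var (k,j) | i j k l.
      i < k \<and> j < l \<and> (i,j) \<in> tableau lam \<and> (i,l) \<in> tableau lam
      \<and> (k,j) \<in> tableau lam \<and> (k,l) \<in> tableau lam}"

definition diag_sums :: "nat list \<Rightarrow> 'k::field mpoly set" where
  "diag_sums lam =
     {(\<Sum>i \<in> {i. 1 \<le> i \<and> (i, k + i) \<in> tableau lam}. Var (i, k + i)) | k. k < hd lam}
   \<union> {(\<Sum>i \<in> {i. 1 \<le> i \<and> (k + i, i) \<in> tableau lam}. Var (k + i, i)) | k. 1 \<le> k \<and> k < length lam}"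

text \<open>Variable order: T_{1,1} > T_{1,2} > ... > T_{n,lambda_n}, i.e. (i,j) is a larger
  variable than (k,l) iff (i,j) is lexicographically smaller.\<close>
definition var_gt :: "nat \<times> nat \<Rightarrow> nat \<times> nat \<Rightarrow> bool" where
  "var_gt v w = (fst v < fst w \<or> (fst v = fst w \<and> snd v < snd w))"

definition mdeg :: "monom \<Rightarrow> nat" where
  "mdeg m = sum (Poly_Mapping.lookup m) (Poly_Mapping.keys m)"

definition revlex_gt :: "monom \<Rightarrow> monom \<Rightarrow> bool" where
  "revlex_gt u v = (mdeg u > mdeg v \<or>
     (mdeg u = mdeg v \<and> (\<exists>x. Poly_Mapping.lookup u x < Poly_Mapping.lookup v x \<and>
        (\<forall>y. var_gt x y \<longrightarrow> Poly_Mapping.lookup u y = Poly_Mapping.lookup v y))))"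

definition lead_monom :: "'k::field mpoly \<Rightarrow> monom" where
  "lead_monom p = (THE m. m \<in> Poly_Mapping.keys p \<and> (\<forall>m' \<in> Poly_Mapping.keys p. m' \<noteq> m \<longrightarrow> revlex_gt m m'))"

definition initial_ideal :: "(nat \<times> nat) set \<Rightarrow> 'k::field mpoly set \<Rightarrow> 'k mpoly set" where
  "initial_ideal V J = ideal_gen V {monomial_poly (lead_monom f) | f. f \<in> J \<and> f \<noteq> 0}"

end

theory Submission
  imports Defs "HOL-Library.Product_Lexorder"
begin

text \<open>Call a monomial of degree \<open>d\<close> lower if it involves a variable \<open>T_p\<close> with \<open>p\<close>
  lexicographically after \<open>(i,j)\<close>. In the degree revlex order every lower monomial is smaller
  than \<open>T_ij^d\<close>, so it suffices to write \<open>T_ij^j\<close> as an element of \<open>I_2 + L\<close> plus lower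
  monomials of degree \<open>j\<close>. By induction on \<open>b\<close>, \<open>T_ic^(b-1) T_ib\<close> has this form (in degree
  \<open>b\<close>) for all \<open>1 \<le> b \<le> c \<le> j\<close>: the diagonal sum through \<open>(i,b)\<close> trades \<open>T_ib\<close> for the
  other cells of its diagonal. Those in lower rows give lower monomials; for a cell \<open>(i-s,b-s)\<close>
  higher up, the 2-minor \<open>T_ic T_(i-s,b-s) - T_(i-s,c) T_(i,b-s)\<close> reduces to the case \<open>b - s\<close>.
  The case \<open>b = c = j\<close> is the theorem.\<close>

lemma poly_ring_mult:
  assumes "p \<in> poly_ring V" "q \<in> poly_ring V"
  shows "p * q \<in> poly_ring V"
proof -
  { fix u assume "u \<in> Poly_Mapping.keys (p * q)"
    then obtain a b where "u = a + b" "a \<in> Poly_Mapping.keys p" "b \<in> Poly_Mapping.keys q"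
      using keys_mult by blast
    then have "Poly_Mapping.keys u \<subseteq> V"
      using assms keys_add[of a b] unfolding poly_ring_def by blast }
  then show ?thesis unfolding poly_ring_def by blast
qed

lemma poly_ring_one: "(1::'k::field mpoly) \<in> poly_ring V"
  by (simp add: poly_ring_def)

lemma Var_in_poly_ring: "v \<in> V \<Longrightarrow> (Var v :: 'k::field mpoly) \<in> poly_ring V"
  by (simp add: poly_ring_def Var_def)

lemma power_in_poly_ring: "p \<in> poly_ring V \<Longrightarrow> (p::'k::field mpoly) ^ k \<in> poly_ring V"
  by (induction k) (auto simp: poly_ring_one poly_ring_mult)

lemma sum_list_map2_mult_left:
  "length cs = length gs \<Longrightarrow>
   sum_list (map2 (*) (map ((*) q) cs) gs) = (q::'a::comm_ring_1) * sum_list (map2 (*) cs gs)"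
  by (induction cs gs rule: list_induct2) (simp_all add: algebra_simps)

lemma ideal_gen_mult:
  assumes "q \<in> poly_ring V" "f \<in> ideal_gen V S"
  shows "q * f \<in> ideal_gen V S"
proof -
  from assms(2) obtain cs gs where h: "length cs = length gs" "set gs \<subseteq> S" "set cs \<subseteq> poly_ring V"
      "f = sum_list (map2 (*) cs gs)"
    unfolding ideal_gen_def by blast
  have "set (map ((*) q) cs) \<subseteq> poly_ring V" using h(3) assms(1) poly_ring_mult by auto
  then show ?thesis unfolding ideal_gen_def
    using h sum_list_map2_mult_left[OF h(1), of q]
    by (intro CollectI exI[of _ "map ((*) q) cs"] exI[of _ gs]) auto
qed

lemma ideal_gen_add:
  assumes "f \<in> ideal_gen V S" "g \<in> ideal_gen V S"
  shows "f + g \<in> ideal_gen V S"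
proof -
  from assms(1) obtain cs gs where h: "length cs = length gs" "set gs \<subseteq> S" "set cs \<subseteq> poly_ring V"
      "f = sum_list (map2 (*) cs gs)"
    unfolding ideal_gen_def by blast
  from assms(2) obtain cs' gs' where h': "length cs' = length gs'" "set gs' \<subseteq> S"
      "set cs' \<subseteq> poly_ring V" "g = sum_list (map2 (*) cs' gs')"
    unfolding ideal_gen_def by blast
  show ?thesis unfolding ideal_gen_def
    using h h' by (intro CollectI exI[of _ "cs @ cs'"] exI[of _ "gs @ gs'"]) auto
qed

lemma ideal_gen_generator: "(g::'k::field mpoly) \<in> S \<Longrightarrow> g \<in> ideal_gen V S"
  unfolding ideal_gen_def using poly_ring_one
  by (intro CollectI exI[of _ "[1]"] exI[of _ "[g]"]) auto

lemma ideal_gen_zero: "0 \<in> ideal_gen V S"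
  unfolding ideal_gen_def by (intro CollectI exI[of _ "[]"]) auto

lemma ideal_gen_uminus:
  assumes "(f::'k::field mpoly) \<in> ideal_gen V S"
  shows "- f \<in> ideal_gen V S"
proof -
  have "- 1 \<in> poly_ring V" by (simp add: poly_ring_def)
  from ideal_gen_mult[OF this assms] show ?thesis by simp
qed

lemma keys_add_monom:
  "Poly_Mapping.keys ((a::monom) + b) = Poly_Mapping.keys a \<union> Poly_Mapping.keys b"
  by (auto simp: in_keys_iff lookup_add)

lemma mdeg_eq_sum_superset:
  "finite A \<Longrightarrow> Poly_Mapping.keys m \<subseteq> A \<Longrightarrow> mdeg m = sum (Poly_Mapping.lookup m) A"
  unfolding mdeg_def by (rule sum.mono_neutral_left) (auto simp: in_keys_iff)

lemma mdeg_add: "mdeg ((a::monom) + b) = mdeg a + mdeg b"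
proof -
  let ?A = "Poly_Mapping.keys a \<union> Poly_Mapping.keys b"
  have "mdeg (a + b) = sum (Poly_Mapping.lookup (a + b)) ?A"
    by (rule mdeg_eq_sum_superset) (auto simp: keys_add_monom)
  also have "\<dots> = sum (Poly_Mapping.lookup a) ?A + sum (Poly_Mapping.lookup b) ?A"
    by (simp add: lookup_add sum.distrib)
  also have "\<dots> = mdeg a + mdeg b"
    using mdeg_eq_sum_superset[of ?A a] mdeg_eq_sum_superset[of ?A b] by auto
  finally show ?thesis .
qed

lemma mdeg_single: "mdeg (Poly_Mapping.single v k) = k"
  by (simp add: mdeg_def)

lemma Var_power: "(Var v :: 'k::field mpoly) ^ k = monomial_poly (Poly_Mapping.single v k)"
  by (induction k) (simp_all add: Var_def monomial_poly_def mult_single single_add[symmetric])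

lemma var_gt_iff_less: "var_gt v w \<longleftrightarrow> v < w"
  by (simp add: var_gt_def less_prod_def')

lemma revlex_gt_asym: "revlex_gt u v \<Longrightarrow> \<not> revlex_gt v u"
proof
  assume a: "revlex_gt u v" and b: "revlex_gt v u"
  from a b have "mdeg u = mdeg v" unfolding revlex_gt_def by auto
  with a b obtain x1 x2 where
    1: "Poly_Mapping.lookup u x1 < Poly_Mapping.lookup v x1"
       "\<forall>y. x1 < y \<longrightarrow> Poly_Mapping.lookup u y = Poly_Mapping.lookup v y" and
    2: "Poly_Mapping.lookup v x2 < Poly_Mapping.lookup u x2"
       "\<forall>y. x2 < y \<longrightarrow> Poly_Mapping.lookup v y = Poly_Mapping.lookup u y"
    unfolding revlex_gt_def var_gt_iff_less by auto
  show False
  proof (cases x1 x2 rule: linorder_cases)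
    case less then show ?thesis using 1(2)[rule_format, of x2] 2(1) by simp
  next
    case equal then show ?thesis using 1(1) 2(1) by simp
  next
    case greater then show ?thesis using 2(2)[rule_format, of x1] 1(1) by simp
  qed
qed

lemma lead_monom_eqI:
  assumes m: "m \<in> Poly_Mapping.keys p"
    and greatest: "\<And>m'. m' \<in> Poly_Mapping.keys p \<Longrightarrow> m' \<noteq> m \<Longrightarrow> revlex_gt m m'"
  shows "lead_monom p = m"
  unfolding lead_monom_def
proof (rule the_equality)
  show "m \<in> Poly_Mapping.keys p \<and> (\<forall>m'\<in>Poly_Mapping.keys p. m' \<noteq> m \<longrightarrow> revlex_gt m m')"
    using m greatest by blast
next
  fix m'' assume h: "m'' \<in> Poly_Mapping.keys p \<and> (\<forall>m'\<in>Poly_Mapping.keys p. m' \<noteq> m'' \<longrightarrow> revlex_gt m'' m')"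
  show "m'' = m"
  proof (rule ccontr)
    assume "m'' \<noteq> m"
    then have "revlex_gt m'' m" "revlex_gt m m''" using h m greatest by auto
    then show False using revlex_gt_asym by blast
  qed
qed

text \<open>\<open>v < w\<close> in the lexicographic order on pairs means that \<open>T_w\<close> is the smaller variable.\<close>

definition lower_terms :: "nat \<times> nat \<Rightarrow> nat \<Rightarrow> 'k::field mpoly set" where
  "lower_terms v d =
     {r. \<forall>u \<in> Poly_Mapping.keys r. mdeg u = d \<and> (\<exists>w \<in> Poly_Mapping.keys u. v < w)}"

lemma lower_terms_zero: "0 \<in> lower_terms v d"
  by (simp add: lower_terms_def)

lemma lower_terms_add: "r \<in> lower_terms v d \<Longrightarrow> s \<in> lower_terms v d \<Longrightarrow> r + s \<in> lower_terms v d"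
  using keys_add[of r s] unfolding lower_terms_def by blast

lemma lower_terms_uminus: "r \<in> lower_terms v d \<Longrightarrow> - r \<in> lower_terms v d"
  by (simp add: lower_terms_def)

lemma Var_in_lower_terms: "v < w \<Longrightarrow> (Var w :: 'k::field mpoly) \<in> lower_terms v 1"
  by (simp add: lower_terms_def Var_def mdeg_single)

lemma lower_terms_Var_mult:
  assumes r: "r \<in> lower_terms v d"
  shows "Var w * r \<in> lower_terms v (Suc d)"
proof -
  { fix u assume "u \<in> Poly_Mapping.keys (Var w * r)"
    then obtain a b where u: "u = a + b" "a \<in> Poly_Mapping.keys (Var w :: 'a mpoly)"
        "b \<in> Poly_Mapping.keys r"
      using keys_mult by blast
    then have "a = Poly_Mapping.single w 1" by (simp add: Var_def)
    moreover from r u(3) obtain w' where "mdeg b = d" "w' \<in> Poly_Mapping.keys b" "v < w'"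
      unfolding lower_terms_def by blast
    ultimately have "mdeg u = Suc d \<and> (\<exists>w' \<in> Poly_Mapping.keys u. v < w')"
      using u(1) by (auto simp: mdeg_add mdeg_single keys_add_monom) }
  then show ?thesis unfolding lower_terms_def by blast
qed

definition ideal_plus_lower ::
    "(nat \<times> nat) set \<Rightarrow> 'k::field mpoly set \<Rightarrow> nat \<times> nat \<Rightarrow> nat \<Rightarrow> 'k mpoly set" where
  "ideal_plus_lower V S v d = {g + r | g r. g \<in> ideal_gen V S \<and> r \<in> lower_terms v d}"

lemma ideal_plus_lowerI_ideal: "f \<in> ideal_gen V S \<Longrightarrow> f \<in> ideal_plus_lower V S v d"
  unfolding ideal_plus_lower_def using lower_terms_zero add_0_right[of f, symmetric] by blast

lemma ideal_plus_lowerI_lower: "r \<in> lower_terms v d \<Longrightarrow> r \<in> ideal_plus_lower V S v d"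
  unfolding ideal_plus_lower_def using ideal_gen_zero add_0_left[of r, symmetric] by blast

lemma ideal_plus_lower_add:
  assumes "p \<in> ideal_plus_lower V S v d" "q \<in> ideal_plus_lower V S v d"
  shows "p + q \<in> ideal_plus_lower V S v d"
proof -
  from assms obtain g r g' r' where "p = g + r" "q = g' + r'"
    "g \<in> ideal_gen V S" "r \<in> lower_terms v d" "g' \<in> ideal_gen V S" "r' \<in> lower_terms v d"
    unfolding ideal_plus_lower_def by blast
  moreover from this have "p + q = (g + g') + (r + r')" by (simp add: algebra_simps)
  ultimately show ?thesis unfolding ideal_plus_lower_def
    using ideal_gen_add lower_terms_add by blast
qed

lemma ideal_plus_lower_uminus:
  assumes "p \<in> ideal_plus_lower V S v d"
  shows "- p \<in> ideal_plus_lower V S v d"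
proof -
  from assms obtain g r where "p = g + r" "g \<in> ideal_gen V S" "r \<in> lower_terms v d"
    unfolding ideal_plus_lower_def by blast
  moreover from this have "- p = - g + - r" by simp
  ultimately show ?thesis unfolding ideal_plus_lower_def
    using ideal_gen_uminus lower_terms_uminus by blast
qed

lemma ideal_plus_lower_diff:
  "p \<in> ideal_plus_lower V S v d \<Longrightarrow> q \<in> ideal_plus_lower V S v d \<Longrightarrow>
   p - q \<in> ideal_plus_lower V S v d"
  using ideal_plus_lower_add[of p V S v d "- q"] ideal_plus_lower_uminus[of q] by simp

lemma ideal_plus_lower_sum:
  "(\<And>a. a \<in> A \<Longrightarrow> f a \<in> ideal_plus_lower V S v d) \<Longrightarrow> sum f A \<in> ideal_plus_lower V S v d"
  by (induction A rule: infinite_finite_induct)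
    (auto intro: ideal_plus_lower_add ideal_plus_lowerI_ideal ideal_gen_zero)

lemma ideal_plus_lower_Var_mult:
  assumes "w \<in> V" "p \<in> ideal_plus_lower V S v d"
  shows "Var w * p \<in> ideal_plus_lower V S v (Suc d)"
proof -
  from assms(2) obtain g r where "p = g + r" "g \<in> ideal_gen V S" "r \<in> lower_terms v d"
    unfolding ideal_plus_lower_def by blast
  moreover from this have "Var w * p = Var w * g + Var w * r" by (simp add: distrib_left)
  ultimately show ?thesis unfolding ideal_plus_lower_def
    using ideal_gen_mult[OF Var_in_poly_ring[OF assms(1)]] lower_terms_Var_mult by blast
qed

lemma ideal_plus_lower_Var_power_mult:
  assumes "w \<in> V" "p \<in> ideal_plus_lower V S v d"
  shows "Var w ^ k * p \<in> ideal_plus_lower V S v (d + k)"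
proof (induction k)
  case (Suc k)
  from ideal_plus_lower_Var_mult[OF assms(1) this] show ?case by (simp add: mult.assoc)
qed (simp add: assms(2))

lemma revlex_gt_single_lower:
  assumes "mdeg m = k" "w \<in> Poly_Mapping.keys m" "v < w"
  shows "revlex_gt (Poly_Mapping.single v k) m"
proof -
  let ?z = "Max (Poly_Mapping.keys m)"
  have fin: "finite (Poly_Mapping.keys m)" by simp
  have z: "v < ?z" using Max_ge[OF fin assms(2)] assms(3) by order
  have "?z \<in> Poly_Mapping.keys m" using Max_in[OF fin] assms(2) by blast
  then have "Poly_Mapping.lookup (Poly_Mapping.single v k) ?z < Poly_Mapping.lookup m ?z"
    using z by (simp add: lookup_single_not_eq in_keys_iff)
  moreover have "Poly_Mapping.lookup (Poly_Mapping.single v k) y = Poly_Mapping.lookup m y"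
    if "?z < y" for y
  proof -
    have "y \<notin> Poly_Mapping.keys m" using Max_ge[OF fin] that by (meson leD)
    moreover have "v \<noteq> y" using that z by auto
    ultimately show ?thesis by (simp add: lookup_single_not_eq in_keys_iff)
  qed
  moreover have "mdeg (Poly_Mapping.single v k) = mdeg m" using assms(1) by (simp add: mdeg_single)
  ultimately show ?thesis
    unfolding revlex_gt_def var_gt_iff_less by blast
qed

lemma monomial_in_initial_ideal:
  assumes g: "g \<in> J" and r: "r \<in> lower_terms v k"
    and eq: "monomial_poly (Poly_Mapping.single v k) = g + r"
  shows "monomial_poly (Poly_Mapping.single v k) \<in> initial_ideal V J"
proof -
  let ?m = "Poly_Mapping.single v k"
  have "?m \<notin> Poly_Mapping.keys r"
    using r by (force simp: lower_terms_def split: if_splits)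
  then have "Poly_Mapping.lookup g ?m = 1"
    using eq[symmetric] by (simp add: eq_diff_eq[symmetric] lookup_minus monomial_poly_def in_keys_iff)
  then have m: "?m \<in> Poly_Mapping.keys g" by (simp add: in_keys_iff)
  have "Poly_Mapping.keys g \<subseteq> insert ?m (Poly_Mapping.keys r)"
    using keys_diff[of "monomial_poly ?m" r] eq[symmetric]
    by (simp add: eq_diff_eq[symmetric] monomial_poly_def)
  then have "lead_monom g = ?m"
  proof (intro lead_monom_eqI[OF m])
    fix m' assume "m' \<in> Poly_Mapping.keys g" "m' \<noteq> ?m"
    with \<open>Poly_Mapping.keys g \<subseteq> _\<close> have "m' \<in> Poly_Mapping.keys r" by blast
    with r obtain w where "mdeg m' = k" "w \<in> Poly_Mapping.keys m'" "v < w"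
      unfolding lower_terms_def by blast
    then show "revlex_gt ?m m'" by (rule revlex_gt_single_lower)
  qed
  moreover have "g \<noteq> 0" using m by auto
  ultimately show ?thesis
    unfolding initial_ideal_def using g by (intro ideal_gen_generator) force
qed

definition diagonal :: "nat list \<Rightarrow> nat \<Rightarrow> nat \<Rightarrow> (nat \<times> nat) set" where
  "diagonal lam a b = {p \<in> tableau lam. fst p + b = snd p + a}"

lemma finite_tableau: "finite (tableau lam)"
  by (rule finite_subset[of _ "{..length lam} \<times> {..Max (set lam)}"])
    (auto simp: tableau_def intro!: order_trans[OF _ Max_ge])

lemma hd_ge_nth:
  fixes lam :: "'a::order list"
  assumes "sorted_wrt (\<ge>) lam" "a < length lam"
  shows "lam ! a \<le> hd lam"
  using assms sorted_wrt_nth_less[OF assms(1), of 0 a] by (cases lam; cases a) auto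

lemma diagonal_sum_in_diag_sums:
  assumes "sorted_wrt (\<ge>) lam" "(a, b) \<in> tableau lam"
  shows "(\<Sum>p \<in> diagonal lam a b. Var p :: 'k::field mpoly) \<in> diag_sums lam"
proof (cases "a \<le> b")
  case True
  define k where "k = b - a"
  have "\<And>x y. x + b = y + a \<longleftrightarrow> y = k + x" using True unfolding k_def by arith
  then have "diagonal lam a b = (\<lambda>t. (t, k + t)) ` {t. 1 \<le> t \<and> (t, k + t) \<in> tableau lam}"
    by (auto simp: diagonal_def tableau_def)
  then have "(\<Sum>p \<in> diagonal lam a b. Var p :: 'k mpoly)
      = (\<Sum>t \<in> {t. 1 \<le> t \<and> (t, k + t) \<in> tableau lam}. Var (t, k + t))"
    by (simp add: sum.reindex inj_on_def)
  moreover have "k < hd lam"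
  proof -
    have "1 \<le> a" "a \<le> length lam" "1 \<le> b" "b \<le> lam ! (a - 1)"
      using assms(2) by (auto simp: tableau_def)
    moreover from this have "lam ! (a - 1) \<le> hd lam" by (intro hd_ge_nth[OF assms(1)]) auto
    ultimately show ?thesis unfolding k_def by linarith
  qed
  ultimately show ?thesis unfolding diag_sums_def by blast
next
  case False
  define k where "k = a - b"
  have "\<And>x y. x + b = y + a \<longleftrightarrow> x = k + y" using False unfolding k_def by arith
  then have "diagonal lam a b = (\<lambda>t. (k + t, t)) ` {t. 1 \<le> t \<and> (k + t, t) \<in> tableau lam}"
    by (auto simp: diagonal_def tableau_def)
  then have "(\<Sum>p \<in> diagonal lam a b. Var p :: 'k mpoly)
      = (\<Sum>t \<in> {t. 1 \<le> t \<and> (k + t, t) \<in> tableau lam}. Var (k + t, t))"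
    by (simp add: sum.reindex inj_on_def)
  moreover have "1 \<le> k \<and> k < length lam"
    using assms False by (auto simp: k_def tableau_def)
  ultimately show ?thesis unfolding diag_sums_def by blast
qed

locale young_cell =
  fixes lam :: "nat list" and i j :: nat
  assumes sorted: "sorted_wrt (\<ge>) lam" and cell: "(i, j) \<in> tableau lam"
begin

abbreviation ideal_lower :: "nat \<Rightarrow> 'k::field mpoly set" where
  "ideal_lower d \<equiv> ideal_plus_lower (tableau lam) (two_minors lam \<union> diag_sums lam) (i, j) d"

lemma cell_bounds: "1 \<le> i" "i \<le> length lam" "1 \<le> j" "j \<le> lam ! (i - 1)"
  using cell by (auto simp: tableau_def)

lemma cell_in_tableauI:
  assumes "1 \<le> a" "a \<le> i" "1 \<le> b" "b \<le> j"
  shows "(a, b) \<in> tableau lam"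
proof -
  have "lam ! (i - 1) \<le> lam ! (a - 1)"
    using sorted_wrt_nth_less[OF sorted, of "a - 1" "i - 1"] assms cell_bounds
    by (cases "a = i") auto
  then show ?thesis using assms cell_bounds by (auto simp: tableau_def)
qed

lemma minor_in_ideal:
  assumes "1 \<le> a" "a < i" "1 \<le> b" "b \<le> j" "1 \<le> c" "c \<le> j"
  shows "(Var (i, c) * Var (a, b) - Var (a, c) * Var (i, b) :: 'k::field mpoly)
           \<in> ideal_gen (tableau lam) (two_minors lam \<union> diag_sums lam)"
proof -
  have cells: "(a, b) \<in> tableau lam" "(a, c) \<in> tableau lam" "(i, b) \<in> tableau lam"
      "(i, c) \<in> tableau lam"
    using cell_in_tableauI assms cell_bounds by auto
  consider "b < c" | "c < b" | "b = c" by linarith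
  then show ?thesis
  proof cases
    case 1
    then have "(Var (a, b) * Var (i, c) - Var (a, c) * Var (i, b) :: 'k mpoly) \<in> two_minors lam"
      unfolding two_minors_def using cells assms(2) by blast
    then show ?thesis by (auto intro: ideal_gen_generator simp: mult.commute)
  next
    case 2
    then have "(Var (a, c) * Var (i, b) - Var (a, b) * Var (i, c) :: 'k mpoly) \<in> two_minors lam"
      unfolding two_minors_def using cells assms(2) by blast
    then have "- (Var (a, c) * Var (i, b) - Var (a, b) * Var (i, c) :: 'k mpoly)
        \<in> ideal_gen (tableau lam) (two_minors lam \<union> diag_sums lam)"
      by (intro ideal_gen_uminus ideal_gen_generator) auto
    then show ?thesis by (simp add: mult.commute)
  qed (simp add: ideal_gen_zero mult.commute)
qed

lemma above_left_in_ideal_lower: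
  assumes "1 \<le> s" "s < i" "1 \<le> b" "b \<le> c" "c \<le> j"
    and hyp: "(Var (i, c) :: 'k::field mpoly) ^ (b - 1) * Var (i, b) \<in> ideal_lower b"
  shows "(Var (i, c) :: 'k mpoly) ^ (b + s - 1) * Var (i - s, b) \<in> ideal_lower (b + s)"
proof -
  let ?x = "Var (i, c) :: 'k mpoly" and ?a = "i - s"
  have cells: "(i, c) \<in> tableau lam" "(?a, c) \<in> tableau lam"
    using assms cell_bounds by (auto intro: cell_in_tableauI)
  have "?x * Var (?a, b) - Var (?a, c) * Var (i, b)
      \<in> ideal_gen (tableau lam) (two_minors lam \<union> diag_sums lam)"
    using assms by (intro minor_in_ideal) auto
  then have "?x ^ (b + s - 2) * (?x * Var (?a, b) - Var (?a, c) * Var (i, b)) \<in> ideal_lower (b + s)"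
    by (intro ideal_plus_lowerI_ideal ideal_gen_mult power_in_poly_ring Var_in_poly_ring cells)
  moreover have "Var (?a, c) * (?x ^ (s - 1) * (?x ^ (b - 1) * Var (i, b))) \<in> ideal_lower (b + s)"
    using ideal_plus_lower_Var_mult[OF cells(2) ideal_plus_lower_Var_power_mult[OF cells(1) hyp,
        of "s - 1"]] assms(1) by (simp add: Suc_diff_le)
  moreover have "?x ^ (b + s - 1) * Var (?a, b)
      = ?x ^ (b + s - 2) * (?x * Var (?a, b) - Var (?a, c) * Var (i, b))
        + Var (?a, c) * (?x ^ (s - 1) * (?x ^ (b - 1) * Var (i, b)))"
  proof -
    have "b + s - 1 = Suc ((s - 1) + (b - 1))" "b + s - 2 = (s - 1) + (b - 1)" using assms by arith+
    moreover have "\<And>y z u w :: 'k mpoly. y ^ Suc ((s - 1) + (b - 1)) * z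
        = y ^ ((s - 1) + (b - 1)) * (y * z - u * w) + u * (y ^ (s - 1) * (y ^ (b - 1) * w))"
      by (simp add: power_add algebra_simps)
    ultimately show ?thesis by (simp only:)
  qed
  ultimately show ?thesis by (simp add: ideal_plus_lower_add)
qed

lemma power_mult_cell_in_ideal_lower:
  "1 \<le> b \<Longrightarrow> b \<le> c \<Longrightarrow> c \<le> j \<Longrightarrow>
   (Var (i, c) :: 'k::field mpoly) ^ (b - 1) * Var (i, b) \<in> ideal_lower b"
proof (induction b rule: less_induct)
  case (less b)
  let ?x = "Var (i, c) :: 'k mpoly" and ?D = "diagonal lam i b"
  have cells: "(i, c) \<in> tableau lam" "(i, b) \<in> tableau lam"
    using less.prems cell_bounds by (auto intro: cell_in_tableauI)
  have D: "finite ?D" "(i, b) \<in> ?D"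
    using cells(2) finite_tableau by (auto simp: diagonal_def intro: finite_subset)
  have "?x ^ (b - 1) * (\<Sum>p \<in> ?D. Var p) \<in> ideal_lower b"
    using diagonal_sum_in_diag_sums[OF sorted cells(2)]
    by (intro ideal_plus_lowerI_ideal ideal_gen_mult power_in_poly_ring Var_in_poly_ring cells
        ideal_gen_generator) auto
  moreover have "?x ^ (b - 1) * Var p \<in> ideal_lower b" if p: "p \<in> ?D - {(i, b)}" for p
  proof -
    obtain a b' where ab': "p = (a, b')" "a + b = b' + i" "1 \<le> a" "1 \<le> b'" "(a, b') \<noteq> (i, b)"
      using p by (cases p) (auto simp: diagonal_def tableau_def)
    then consider "a < i" | "i < a" by fastforce
    then show ?thesis
    proof cases
      case 1
      then have b: "b = b' + (i - a)" "i - (i - a) = a" using ab' by simp_all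
      then have "?x ^ (b' - 1) * Var (i, b') \<in> ideal_lower b'"
        using 1 ab' less by (intro less.IH) auto
      then have "?x ^ (b' + (i - a) - 1) * Var (i - (i - a), b') \<in> ideal_lower (b' + (i - a))"
        using 1 ab' less.prems b by (intro above_left_in_ideal_lower) auto
      then show ?thesis using ab'(1) b by simp
    next
      case 2
      then have "Var p \<in> ideal_lower 1"
        by (intro ideal_plus_lowerI_lower Var_in_lower_terms) (simp add: ab' less_prod_def)
      from ideal_plus_lower_Var_power_mult[OF cells(1) this, of "b - 1"] show ?thesis
        using less.prems by simp
    qed
  qed
  then have "(\<Sum>p \<in> ?D - {(i, b)}. ?x ^ (b - 1) * Var p) \<in> ideal_lower b"
    by (intro ideal_plus_lower_sum)
  moreover have "?x ^ (b - 1) * Var (i, b)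
      = ?x ^ (b - 1) * (\<Sum>p \<in> ?D. Var p) - (\<Sum>p \<in> ?D - {(i, b)}. ?x ^ (b - 1) * Var p)"
    by (simp add: sum.remove[OF D] distrib_left sum_distrib_left)
  ultimately show ?case by (simp add: ideal_plus_lower_diff)
qed

end

theorem lemma5p3:
  fixes lam :: "nat list" and i j :: nat
  assumes "lam \<noteq> []"
    and "sorted_wrt (\<ge>) lam"
    and "\<forall>x \<in> set lam. 0 < x"
    and "(i, j) \<in> tableau lam"
  shows "(monomial_poly (Poly_Mapping.single (i, j) j) :: 'k::field mpoly)
           \<in> initial_ideal (tableau lam)
               (ideal_gen (tableau lam) (two_minors lam \<union> diag_sums lam))"
proof -
  interpret young_cell lam i j using assms(2,4) by unfold_locales
  have "(Var (i, j) :: 'k mpoly) ^ j = Var (i, j) ^ (j - 1) * Var (i, j)"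
    using cell_bounds(3) by (simp flip: power_Suc2)
  also have "\<dots> \<in> ideal_lower j"
    by (rule power_mult_cell_in_ideal_lower) (use cell_bounds in auto)
  finally obtain g r where "g \<in> ideal_gen (tableau lam) (two_minors lam \<union> diag_sums lam)"
      "r \<in> lower_terms (i, j) j" "monomial_poly (Poly_Mapping.single (i, j) j) = g + (r :: 'k mpoly)"
    unfolding ideal_plus_lower_def Var_power by blast
  then show ?thesis by (rule monomial_in_initial_ideal)
qed

end
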